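(* Let $k>v_1$ and let $\varphi=(x(t),y(t))$ be the $k$-jet of an element of $\Sigma_\Gamma$. For $b\ne0$, the vector $(0,bt^k)$ belongs to $T_1$ (resp. $\widetilde T$) if and only if $k+v_0\in\Lambda^2_\varphi$ (resp. $k+v_0\in\Lambda'_\varphi$).
   Context: $\mathcal O_1=\mathbb C\{t\}$, $\mathcal O_2=\mathbb C\{X,Y\}$, with maximal ideals $\mathcal M_1,\mathcal M_2$; $\varphi^*(h)=h(x(t),y(t))$; $j^k$ denotes truncation modulo $t^{k+1}$, componentwise. $\Gamma$ is the semigroup of values of a plane branch with minimal generators $v_0<v_1<\cdots<v_g$ and conductor $c$; $\Sigma_\Gamma$ is the set of Puiseux parametrizations $(t^{v_0},t^{v_1}+\sum_{v_1<i<c}a_it^i)$ (primitive, $v_0\nmid v_1$) whose semigroup of values equals $\Gamma$. $T_1=\{j^k(x'\epsilon+\varphi^*(g),\ y'\epsilon+\varphi^*(h)):\epsilon\in\mathcal M_1^2,\ g,h\in\mathcal M_2^2\}$ and $\widetilde T$ is defined the same way but with $g\in\langle X^2,Y\rangle$, $h\in\mathcal M_2^2$ (tangent spaces to the $\mathcal A_1^k$- and $\widetilde{\mathcal A}^k$-orbits). For $\omega=h\,dX+g\,dY$ put $v_\varphi(\omega)=\mathrm{ord}_t(\varphi^*(h)x'(t)+\varphi^*(g)y'(t))+1$; $\Lambda^2_\varphi=\{v_\varphi(h\,dX+g\,dY): g,h\in\mathcal M_2^2\}$ and $\Lambda'_\varphi=\{v_\varphi(h\,dX+g\,dY): g\in\langle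 X^2,Y\rangle,\ h\in\mathcal M_2^2\}$ (only forms with nonzero pull-back considered). *)

theory Defs
  imports "HOL-Computational_Algebra.Formal_Power_Series"
begin

text \<open>C{t}: convergent power series in one variable, modelled as complex fps with
  geometric coefficient bounds.\<close>
definition conv1 :: "complex fps \<Rightarrow> bool" where
  "conv1 f \<longleftrightarrow> (\<exists>r>0. \<exists>M. \<forall>n. norm (fps_nth f n) * (r::real) ^ n \<le> M)"

text \<open>C{X,Y}: convergent power series in two variables, given by their coefficients
  h i j (coefficient of X^i Y^j).\<close>
type_synonym series2 = "nat \<Rightarrow> nat \<Rightarrow> complex"

definition conv2 :: "series2 \<Rightarrow> bool" where
  "conv2 h \<longleftrightarrow> (\<exists>r>0. \<exists>M. \<forall>i j. norm (h i j) * (r::real) ^ (i + j) \<le> M)"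

definition M1sq :: "complex fps set" where
  "M1sq = {e. conv1 e \<and> fps_nth e 0 = 0 \<and> fps_nth e 1 = 0}"

definition M2sq :: "series2 set" where
  "M2sq = {h. conv2 h \<and> h 0 0 = 0 \<and> h 1 0 = 0 \<and> h 0 1 = 0}"

text \<open>The ideal generated by X^2 and Y in C{X,Y}: no constant term, no X term.\<close>
definition IdX2Y :: "series2 set" where
  "IdX2Y = {h. conv2 h \<and> h 0 0 = 0 \<and> h 1 0 = 0}"

type_synonym param = "complex fps \<times> complex fps"

text \<open>Pull-back phi^*(h) = h(x(t),y(t)), for x(0)=y(0)=0 (then x^i y^j has order \<ge> i+j,
  so only finitely many terms contribute to each coefficient).\<close>
definition pull :: "param \<Rightarrow> series2 \<Rightarrow> complex fps" where
  "pull \<phi> h = Abs_fps (\<lambda>n. \<Sum>i\<le>n. \<Sum>j\<le>n. h i j * fps_nth (fst \<phi> ^ i * snd \<phi> ^ j) n)"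

definition semigroup_of :: "param \<Rightarrow> nat set" where
  "semigroup_of \<phi> = {subdegree (pull \<phi> h) | h. conv2 h \<and> pull \<phi> h \<noteq> 0}"

definition sg_v0 :: "nat set \<Rightarrow> nat" where
  "sg_v0 G = (LEAST n. n \<in> G \<and> 0 < n)"

definition sg_v1 :: "nat set \<Rightarrow> nat" where
  "sg_v1 G = (LEAST n. n \<in> G \<and> \<not> sg_v0 G dvd n)"

definition conductor :: "nat set \<Rightarrow> nat" where
  "conductor G = (LEAST c. \<forall>n\<ge>c. n \<in> G)"

definition primitive :: "param \<Rightarrow> bool" where
  "primitive \<phi> \<longleftrightarrow> Gcd ({n. fps_nth (fst \<phi>) n \<noteq> 0} \<union> {n. fps_nth (snd \<phi>) n \<noteq> 0}) = (1::nat)"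

definition Sigma :: "nat set \<Rightarrow> param set" where
  "Sigma G = {\<phi>. \<exists>a :: nat \<Rightarrow> complex.
      \<phi> = (fps_X ^ sg_v0 G,
           fps_X ^ sg_v1 G + (\<Sum>i\<in>{sg_v1 G<..<conductor G}. fps_const (a i) * fps_X ^ i))
      \<and> primitive \<phi> \<and> \<not> sg_v0 G dvd sg_v1 G \<and> semigroup_of \<phi> = G}"

definition jet :: "nat \<Rightarrow> complex fps \<Rightarrow> complex fps" where
  "jet k f = Abs_fps (\<lambda>n. if n \<le> k then fps_nth f n else 0)"

definition jet_pair :: "nat \<Rightarrow> param \<Rightarrow> param" where
  "jet_pair k \<phi> = (jet k (fst \<phi>), jet k (snd \<phi>))"

definition T1 :: "nat \<Rightarrow> param \<Rightarrow> param set" where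
  "T1 k \<phi> = {(jet k (fps_deriv (fst \<phi>) * e + pull \<phi> g), jet k (fps_deriv (snd \<phi>) * e + pull \<phi> h))
     | e g h. e \<in> M1sq \<and> g \<in> M2sq \<and> h \<in> M2sq}"

definition Ttilde :: "nat \<Rightarrow> param \<Rightarrow> param set" where
  "Ttilde k \<phi> = {(jet k (fps_deriv (fst \<phi>) * e + pull \<phi> g), jet k (fps_deriv (snd \<phi>) * e + pull \<phi> h))
     | e g h. e \<in> M1sq \<and> g \<in> IdX2Y \<and> h \<in> M2sq}"

text \<open>Pull-back of the 1-form h dX + g dY (up to the factor dt), and its value.\<close>
definition form_pull :: "param \<Rightarrow> series2 \<Rightarrow> series2 \<Rightarrow> complex fps" where
  "form_pull \<phi> h g = pull \<phi> h * fps_deriv (fst \<phi>) + pull \<phi> g * fps_deriv (snd \<phi>)"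

definition vform :: "param \<Rightarrow> series2 \<Rightarrow> series2 \<Rightarrow> nat" where
  "vform \<phi> h g = subdegree (form_pull \<phi> h g) + 1"

definition Lambda2 :: "param \<Rightarrow> nat set" where
  "Lambda2 \<phi> = {vform \<phi> h g | h g. g \<in> M2sq \<and> h \<in> M2sq \<and> form_pull \<phi> h g \<noteq> 0}"

definition LambdaP :: "param \<Rightarrow> nat set" where
  "LambdaP \<phi> = {vform \<phi> h g | h g. g \<in> IdX2Y \<and> h \<in> M2sq \<and> form_pull \<phi> h g \<noteq> 0}"

end

theory Submission
  imports Defs
begin

text \<open>
  Write \<open>\<phi> = (x, y)\<close>, \<open>A = x' e + \<phi>\<^sup>*g\<close>, \<open>B = y' e + \<phi>\<^sup>*h\<close>.  The whole proof rests on the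
  identity \<open>y' A - x' B = \<phi>\<^sup>*g y' - \<phi>\<^sup>*h x'\<close>, i.e. the pull-back of the 1-form
  \<open>-h dX + g dY\<close>.  For a jet of an element of \<open>\<Sigma>\<^sub>\<Gamma>\<close> we have \<open>x = t^v0\<close> and
  \<open>ord y > v0\<close> (because \<open>v0 < v1\<close>).

  Forward: if \<open>A \<equiv> 0\<close> and \<open>B \<equiv> b t^k\<close> modulo \<open>t^(k+1)\<close>, then \<open>y' A\<close> has order
  \<open>> k + v0 - 1\<close> while \<open>x' B\<close> has order exactly \<open>k + v0 - 1\<close>, so the form has value \<open>k + v0\<close>.
  Backward: given a form \<open>h dX + g dY\<close> of value \<open>k + v0\<close>, the condition on \<open>g\<close> makes
  \<open>\<phi>\<^sup>*g\<close> divisible by \<open>x'\<close>, so \<open>e\<close> can be chosen with \<open>x' e = -l \<phi>\<^sup>*g\<close> exactly; then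
  \<open>x' (y' e - l \<phi>\<^sup>*h)\<close> is \<open>-l\<close> times the pulled-back form, whose order pins down
  \<open>y' e - l \<phi>\<^sup>*h\<close> modulo \<open>t^(k+1)\<close>, and the scalar \<open>l\<close> is tuned to produce \<open>b t^k\<close>.
\<close>

unbundle fps_syntax

definition order_ge :: "nat \<Rightarrow> 'a::zero fps \<Rightarrow> bool" where
  "order_ge m f \<longleftrightarrow> (\<forall>i<m. f $ i = 0)"

lemma order_ge_mult:
  fixes f g :: "'a::semiring_0 fps"
  assumes "order_ge a f" "order_ge b g"
  shows "order_ge (a + b) (f * g)"
  unfolding order_ge_def
proof (intro allI impI)
  fix n assume n: "n < a + b"
  have "f $ i * g $ (n - i) = 0" if "i \<in> {0..n}" for i
  proof (cases "i < a")
    case True then show ?thesis using assms(1) by (simp add: order_ge_def)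
  next
    case False then have "n - i < b" using n that by auto
    then show ?thesis using assms(2) by (simp add: order_ge_def)
  qed
  then show "(f * g) $ n = 0" by (simp add: fps_mult_nth)
qed

lemma order_ge_mult_nth:
  fixes f g :: "'a::semiring_0 fps"
  assumes "order_ge a f" "order_ge b g"
  shows "(f * g) $ (a + b) = f $ a * g $ b"
proof -
  let ?c = "\<lambda>i. f $ i * g $ (a + b - i)"
  have "?c i = 0" if "i \<in> {0..a+b} - {a}" for i
  proof (cases "i < a")
    case True then show ?thesis using assms(1) by (simp add: order_ge_def)
  next
    case False then have "a + b - i < b" using that by auto
    then show ?thesis using assms(2) by (simp add: order_ge_def)
  qed
  then have "(\<Sum>i\<in>{0..a+b} - {a}. ?c i) = 0" by (intro sum.neutral) auto
  moreover have "(\<Sum>i=0..a+b. ?c i) = ?c a + (\<Sum>i\<in>{0..a+b} - {a}. ?c i)"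
    by (rule sum.remove) auto
  ultimately show ?thesis by (simp add: fps_mult_nth)
qed

lemma order_ge_power:
  fixes f :: "'a::semiring_1 fps"
  shows "order_ge m f \<Longrightarrow> order_ge (m * j) (f ^ j)"
proof (induction j)
  case 0 then show ?case by (simp add: order_ge_def)
next
  case (Suc j)
  have "order_ge (m + m * j) (f * f ^ j)" by (rule order_ge_mult) (use Suc in auto)
  then show ?case by (simp add: algebra_simps)
qed

lemma order_ge_subdegree:
  assumes "order_ge d f" "f $ d \<noteq> 0"
  shows "f \<noteq> 0" "subdegree f = d"
  using assms by (auto simp: order_ge_def intro: subdegreeI)

lemma fps_X_power_mult_shift:
  assumes "order_ge m f"
  shows "fps_X ^ m * fps_shift m f = f"
  using assms by (intro fps_ext) (auto simp: fps_X_power_mult_nth order_ge_def)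

lemma jet_nth: "jet k f $ n = (if n \<le> k then f $ n else 0)"
  unfolding jet_def by simp

lemma jet_mult_jet: "jet k (f * jet k g) = jet k (f * g)"
  by (intro fps_ext) (auto simp: fps_mult_nth jet_nth intro!: sum.cong)

lemma jet_add: "jet k (f + g) = jet k f + jet k g"
  by (intro fps_ext) (simp add: jet_nth)

lemma jet_0: "jet k 0 = 0"
  by (intro fps_ext) (simp add: jet_nth)

text \<open>Jets are polynomials, hence convergent.\<close>
lemma conv1_jet: "conv1 (jet k f)"
  unfolding conv1_def
proof (intro exI conjI allI)
  show "(0::real) < 1" by simp
  fix n
  show "norm (jet k f $ n) * (1::real) ^ n \<le> (\<Sum>m\<le>k. norm (f $ m))"
  proof (cases "n \<le> k")
    case True
    then have "norm (f $ n) \<le> (\<Sum>m\<le>k. norm (f $ m))"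
      by (intro member_le_sum) auto
    then show ?thesis using True by (simp add: jet_nth)
  next
    case False then show ?thesis by (simp add: jet_nth sum_nonneg)
  qed
qed

lemma jet_eq_0_order_ge: "jet k f = 0 \<Longrightarrow> order_ge (k + 1) f"
  unfolding order_ge_def by (metis Suc_eq_plus1 fps_zero_nth jet_nth less_Suc_eq_le)

lemma jet_eq_monomial:
  assumes "jet k f = fps_const b * fps_X ^ k"
  shows "order_ge k f" "f $ k = b"
proof -
  have "f $ n = (if n = k then b else 0)" if "n \<le> k" for n
    using arg_cong[where f = "\<lambda>f. f $ n", OF assms] that by (simp add: jet_nth)
  then show "order_ge k f" "f $ k = b" by (auto simp: order_ge_def)
qed

lemma pull_scale: "pull \<phi> (\<lambda>i j. a * g i j) = fps_const a * pull \<phi> g"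
  unfolding pull_def by (rule fps_ext) (simp add: sum_distrib_left mult.assoc)

lemma conv2_scale: "conv2 g \<Longrightarrow> conv2 (\<lambda>i j. a * g i j)"
  unfolding conv2_def
proof (elim exE conjE)
  fix r M assume r: "(0::real) < r" and M: "\<forall>i j. norm (g i j) * r ^ (i + j) \<le> M"
  show "\<exists>r>0. \<exists>M. \<forall>i j. norm (a * g i j) * (r::real) ^ (i + j) \<le> M"
  proof (intro exI conjI allI)
    show "0 < r" by fact
    fix i j
    have "norm (a * g i j) * r ^ (i + j) = norm a * (norm (g i j) * r ^ (i + j))"
      by (simp add: norm_mult)
    also have "\<dots> \<le> norm a * M" using M by (intro mult_left_mono) auto
    finally show "norm (a * g i j) * r ^ (i + j) \<le> norm a * M" .
  qed
qed

lemma M2sq_scale: "h \<in> M2sq \<Longrightarrow> (\<lambda>i j. a * h i j) \<in> M2sq"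
  unfolding M2sq_def by (auto intro: conv2_scale)

text \<open>If \<open>x = t^v0\<close> and \<open>ord y > v0\<close>, a series without constant and \<open>X\<close>-term pulls back to a
  series of order at least \<open>v0 + 1\<close>: every remaining monomial \<open>x^i y^j\<close> has \<open>i \<ge> 2\<close> or \<open>j \<ge> 1\<close>.\<close>
lemma pull_order_ge:
  assumes x: "fst \<phi> = fps_X ^ v0" and v0: "v0 \<ge> 1" and y: "order_ge (v0 + 1) (snd \<phi>)"
    and g: "g 0 0 = 0" "g 1 0 = 0"
  shows "order_ge (v0 + 1) (pull \<phi> g)"
  unfolding order_ge_def
proof (intro allI impI)
  fix n assume n: "n < v0 + 1"
  have term_zero: "g i j * (fst \<phi> ^ i * snd \<phi> ^ j) $ n = 0" for i j
  proof (cases "(i = 0 \<or> i = 1) \<and> j = 0")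
    case True then show ?thesis using g by auto
  next
    case False
    have "order_ge v0 (fst \<phi>)" using x by (simp add: order_ge_def)
    then have "order_ge (v0 * i + (v0 + 1) * j) (fst \<phi> ^ i * snd \<phi> ^ j)"
      by (intro order_ge_mult order_ge_power y)
    moreover have "v0 + 1 \<le> v0 * i + (v0 + 1) * j"
    proof (cases "j = 0")
      case True
      with False have "v0 * 2 \<le> v0 * i" by (intro mult_left_mono) auto
      then show ?thesis using v0 by linarith
    next
      case False
      then have "(v0 + 1) * 1 \<le> (v0 + 1) * j" by (intro mult_left_mono) auto
      then show ?thesis by auto
    qed
    ultimately show ?thesis using n by (auto simp: order_ge_def)
  qed
  show "pull \<phi> g $ n = 0"
    unfolding pull_def by (simp only: fps_nth_Abs_fps term_zero sum.neutral_const)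
qed

definition coordY :: series2 where
  "coordY i j = (if i = 0 \<and> j = 1 then 1 else 0)"

lemma conv2_coordY: "conv2 coordY"
  unfolding conv2_def by (rule exI[of _ 1]) (auto simp: coordY_def intro!: exI[of _ 1])

lemma pull_coordY_nth: "pull \<phi> coordY $ n = (if 1 \<le> n then snd \<phi> $ n else 0)"
proof -
  have "(\<Sum>j\<le>n. coordY i j * (fst \<phi> ^ i * snd \<phi> ^ j) $ n)
      = (if i = 0 \<and> 1 \<le> n then snd \<phi> $ n else 0)" for i
    by (cases "i = 0") (auto simp: coordY_def if_distrib[of "\<lambda>x. x * _"] cong: if_cong)
  then show ?thesis unfolding pull_def by simp
qed

lemma deriv_X_power:
  assumes "v0 \<ge> 1"
  shows "fps_deriv (fps_X ^ v0 :: 'a::comm_ring_1 fps) = fps_X ^ (v0 - 1) * fps_const (of_nat v0)"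
  using assms by (intro fps_ext) (auto simp: fps_X_power_mult_nth)

text \<open>Series of order at least \<open>v0 - 1\<close> are exactly divisible by \<open>(t^v0)' = v0 t^(v0-1)\<close>.\<close>
lemma deriv_X_power_divides:
  fixes P :: "'a::field_char_0 fps"
  assumes "v0 \<ge> 1" "order_ge (v0 - 1) P"
  shows "fps_deriv (fps_X ^ v0) * (fps_const (c / of_nat v0) * fps_shift (v0 - 1) P)
       = fps_const c * P"
proof -
  have "fps_deriv (fps_X ^ v0) * (fps_const (c / of_nat v0) * fps_shift (v0 - 1) P)
      = fps_const (of_nat v0 * (c / of_nat v0)) * (fps_X ^ (v0 - 1) * fps_shift (v0 - 1) P)"
    using assms(1) by (simp add: deriv_X_power mult_ac)
  also have "\<dots> = fps_const c * P"
    using assms by (simp add: fps_X_power_mult_shift)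
  finally show ?thesis .
qed

lemma form_pull_tangent:
  "form_pull \<phi> (\<lambda>i j. - h i j) g
     = fps_deriv (snd \<phi>) * (fps_deriv (fst \<phi>) * e + pull \<phi> g)
       - fps_deriv (fst \<phi>) * (fps_deriv (snd \<phi>) * e + pull \<phi> h)"
proof -
  have "pull \<phi> (\<lambda>i j. - h i j) = - pull \<phi> h"
    using pull_scale[of \<phi> "-1" h] by (simp add: fps_const_neg[symmetric] del: fps_const_neg)
  then show ?thesis unfolding form_pull_def by (simp add: algebra_simps)
qed

lemma form_value_of_tangent:
  assumes x: "fst \<phi> = fps_X ^ v0" and v0: "v0 \<ge> 1" and y: "order_ge (v0 + 1) (snd \<phi>)"
    and b: "b \<noteq> 0"
    and A: "jet k (fps_deriv (fst \<phi>) * e + pull \<phi> g) = 0"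
    and B: "jet k (fps_deriv (snd \<phi>) * e + pull \<phi> h) = fps_const b * fps_X ^ k"
  shows "form_pull \<phi> (\<lambda>i j. - h i j) g \<noteq> 0 \<and> vform \<phi> (\<lambda>i j. - h i j) g = k + v0"
proof -
  define x' where "x' = fps_deriv (fst \<phi>)"
  define y' where "y' = fps_deriv (snd \<phi>)"
  define F where "F = form_pull \<phi> (\<lambda>i j. - h i j) g"
  have x': "order_ge (v0 - 1) x'" "x' $ (v0 - 1) = of_nat v0"
    using x v0 by (auto simp: x'_def order_ge_def)
  have y': "order_ge v0 y'" using y by (auto simp: y'_def order_ge_def)
  note A' = jet_eq_0_order_ge[OF A] and B' = jet_eq_monomial[OF B]
  have F: "F = y' * (x' * e + pull \<phi> g) - x' * (y' * e + pull \<phi> h)"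
    unfolding F_def x'_def y'_def by (rule form_pull_tangent)
  have ord_yA: "order_ge (v0 + (k + 1)) (y' * (x' * e + pull \<phi> g))"
    using order_ge_mult[OF y' A'] by (simp add: x'_def)
  have ord_xB: "order_ge (v0 - 1 + k) (x' * (y' * e + pull \<phi> h))"
    using order_ge_mult[OF x'(1) B'(1)] by (simp add: y'_def)
  have lead_xB: "(x' * (y' * e + pull \<phi> h)) $ (v0 - 1 + k) = of_nat v0 * b"
    using order_ge_mult_nth[OF x'(1) B'(1)] x'(2) B'(2) by (simp add: y'_def)
  have ord_F: "order_ge (v0 - 1 + k) F"
    using ord_yA ord_xB v0 unfolding F order_ge_def by auto
  have "F $ (v0 - 1 + k) = - (of_nat v0 * b)"
    using ord_yA lead_xB v0 unfolding F order_ge_def by auto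
  then have lead_F: "F $ (v0 - 1 + k) \<noteq> 0" using v0 b by simp
  show ?thesis
    using order_ge_subdegree[OF ord_F lead_F] v0 unfolding vform_def F_def[symmetric] by auto
qed

lemma jet_of_quotient_by_deriv:
  assumes x: "fst \<phi> = fps_X ^ v0" and v0: "v0 \<ge> 1"
    and Q: "fps_deriv (fst \<phi>) * Q = fps_const c * F" and F: "subdegree F = v0 - 1 + k"
  shows "jet k Q = fps_const (c / of_nat v0 * F $ (v0 - 1 + k)) * fps_X ^ k"
proof -
  have v0c: "(of_nat v0 :: complex) \<noteq> 0" using v0 by simp
  have Q_nth: "Q $ n = c / of_nat v0 * F $ (n + (v0 - 1))" for n
  proof -
    have "fps_deriv (fst \<phi>) = fps_X ^ (v0 - 1) * fps_const (of_nat v0)"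
      using deriv_X_power[OF v0] by (simp add: x)
    then have "(fps_deriv (fst \<phi>) * Q) $ (n + (v0 - 1)) = of_nat v0 * Q $ n"
      by (simp only: mult.assoc fps_X_power_mult_nth) simp
    then have "of_nat v0 * Q $ n = c * F $ (n + (v0 - 1))" unfolding Q by simp
    then show ?thesis using v0c by (simp add: field_simps)
  qed
  have "Q $ n = 0" if "n < k" for n
  proof -
    have "F $ (n + (v0 - 1)) = 0" using that F by (intro nth_less_subdegree_zero) simp
    then show ?thesis by (simp add: Q_nth)
  qed
  moreover have "Q $ k = c / of_nat v0 * F $ (v0 - 1 + k)"
    by (simp add: Q_nth add.commute)
  ultimately show ?thesis
    by (intro fps_ext) (auto simp: jet_nth)
qed
text \<open>The pulled
  back \<open>dY\<close>-coefficient has order \<open>> v0\<close>, so \<open>x' E = -l \<phi>\<^sup>*g\<close> has an exact solution \<open>E\<close> of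
  order \<open>\<ge> 2\<close>, and \<open>e\<close> is its \<open>k\<close>-jet.\<close>
lemma tangent_of_form_value:
  assumes x: "fst \<phi> = fps_X ^ v0" and v0: "v0 \<ge> 1" and y: "order_ge (v0 + 1) (snd \<phi>)"
    and g: "g 0 0 = 0" "g 1 0 = 0"
    and F: "form_pull \<phi> h g \<noteq> 0" and val: "vform \<phi> h g = k + v0"
  shows "\<exists>l e. e \<in> M1sq \<and> jet k (fps_deriv (fst \<phi>) * e + pull \<phi> (\<lambda>i j. l * g i j)) = 0
     \<and> jet k (fps_deriv (snd \<phi>) * e + pull \<phi> (\<lambda>i j. - (l * h i j))) = fps_const b * fps_X ^ k"
proof -
  define x' where "x' = fps_deriv (fst \<phi>)"
  define y' where "y' = fps_deriv (snd \<phi>)"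
  define P where "P = pull \<phi> g"
  define c where "c = form_pull \<phi> h g $ (v0 - 1 + k)"
  have sd: "subdegree (form_pull \<phi> h g) = v0 - 1 + k" using val v0 unfolding vform_def by arith
  then have c: "c \<noteq> 0" using nth_subdegree_nonzero[OF F] by (simp add: c_def)
  have ord_P: "order_ge (v0 + 1) P" unfolding P_def by (rule pull_order_ge[where g = g, OF x v0 y g])
  define l where "l = - (b * of_nat v0) / c"
  define E where "E = fps_const (- l / of_nat v0) * fps_shift (v0 - 1) P"
  define e where "e = jet k E"
  have xE: "x' * E = fps_const (- l) * P"
    unfolding E_def x'_def x
    by (rule deriv_X_power_divides[OF v0]) (use ord_P in \<open>auto simp: order_ge_def\<close>)
  have pull_l: "pull \<phi> (\<lambda>i j. l * g i j) = fps_const l * P"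
    "pull \<phi> (\<lambda>i j. - (l * h i j)) = fps_const (- l) * pull \<phi> h"
    using pull_scale[of \<phi> "- l" h] by (simp_all add: pull_scale P_def)
  have "jet k (x' * e + pull \<phi> (\<lambda>i j. l * g i j)) = jet k (x' * E + fps_const l * P)"
    unfolding e_def jet_add jet_mult_jet pull_l ..
  also have "\<dots> = 0" unfolding xE distrib_right[symmetric] by (simp add: jet_0)
  finally have eqA: "jet k (x' * e + pull \<phi> (\<lambda>i j. l * g i j)) = 0" .
  define Q where "Q = y' * E + fps_const (- l) * pull \<phi> h"
  have "x' * Q = y' * (x' * E) + fps_const (- l) * (pull \<phi> h * x')"
    unfolding Q_def by (simp add: algebra_simps)
  also have "\<dots> = fps_const (- l) * form_pull \<phi> h g"
    unfolding xE by (simp add: form_pull_def x'_def y'_def P_def algebra_simps)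
  finally have "jet k Q = fps_const (- l / of_nat v0 * c) * fps_X ^ k"
    unfolding c_def x'_def by (rule jet_of_quotient_by_deriv[OF x v0 _ sd])
  also have "- l / of_nat v0 * c = b" using v0 c by (simp add: l_def field_simps)
  finally have eqB: "jet k (y' * e + pull \<phi> (\<lambda>i j. - (l * h i j))) = fps_const b * fps_X ^ k"
    unfolding e_def jet_add jet_mult_jet pull_l by (simp add: Q_def jet_add)
  have "E $ 0 = 0" "E $ 1 = 0" using ord_P v0 by (simp_all add: E_def order_ge_def)
  then have "e \<in> M1sq" by (simp add: M1sq_def e_def conv1_jet jet_nth)
  then show ?thesis using eqA eqB unfolding x'_def y'_def by blast
qed

text \<open>The tangent jets and the form values, parametrized by the space \<open>S\<close> from which the
  \<open>dY\<close>-coefficient / second component is taken (\<open>M\<^sub>2\<^sup>2\<close> for \<open>T\<^sub>1\<close>, \<open>\<langle>X\<^sup>2, Y\<rangle>\<close> for \<open>T\<close>~).\<close>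
definition tangent_jets :: "nat \<Rightarrow> param \<Rightarrow> series2 set \<Rightarrow> param set" where
  "tangent_jets k \<phi> S =
     {(jet k (fps_deriv (fst \<phi>) * e + pull \<phi> g), jet k (fps_deriv (snd \<phi>) * e + pull \<phi> h))
      | e g h. e \<in> M1sq \<and> g \<in> S \<and> h \<in> M2sq}"

definition form_values :: "param \<Rightarrow> series2 set \<Rightarrow> nat set" where
  "form_values \<phi> S = {vform \<phi> h g | h g. g \<in> S \<and> h \<in> M2sq \<and> form_pull \<phi> h g \<noteq> 0}"

lemma tangent_jets_iff_form_values:
  assumes x: "fst \<phi> = fps_X ^ v0" and v0: "v0 \<ge> 1" and y: "order_ge (v0 + 1) (snd \<phi>)"
    and b: "b \<noteq> 0"
    and S_scale: "\<And>g a. g \<in> S \<Longrightarrow> (\<lambda>i j. a * g i j) \<in> S"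
    and S_vanish: "\<And>g. g \<in> S \<Longrightarrow> g 0 0 = 0 \<and> g 1 0 = 0"
  shows "(0, fps_const b * fps_X ^ k) \<in> tangent_jets k \<phi> S \<longleftrightarrow> k + v0 \<in> form_values \<phi> S"
proof
  assume "(0, fps_const b * fps_X ^ k) \<in> tangent_jets k \<phi> S"
  then obtain e g h where "g \<in> S" "h \<in> M2sq"
    and A: "jet k (fps_deriv (fst \<phi>) * e + pull \<phi> g) = 0"
    and B: "jet k (fps_deriv (snd \<phi>) * e + pull \<phi> h) = fps_const b * fps_X ^ k"
    by (auto simp: tangent_jets_def)
  moreover have "(\<lambda>i j. - h i j) \<in> M2sq" using M2sq_scale[OF \<open>h \<in> M2sq\<close>, of "-1"] by simp
  moreover note form_value_of_tangent[OF x v0 y b A B]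
  ultimately show "k + v0 \<in> form_values \<phi> S"
    unfolding form_values_def by (metis (mono_tags, lifting) mem_Collect_eq)
next
  assume "k + v0 \<in> form_values \<phi> S"
  then obtain h g where "g \<in> S" "h \<in> M2sq" "form_pull \<phi> h g \<noteq> 0" "vform \<phi> h g = k + v0"
    by (auto simp: form_values_def)
  moreover obtain l e where "e \<in> M1sq"
    "jet k (fps_deriv (fst \<phi>) * e + pull \<phi> (\<lambda>i j. l * g i j)) = 0"
    "jet k (fps_deriv (snd \<phi>) * e + pull \<phi> (\<lambda>i j. - (l * h i j))) = fps_const b * fps_X ^ k"
    using tangent_of_form_value[OF x v0 y _ _ calculation(3,4)] S_vanish[OF \<open>g \<in> S\<close>] by blast
  moreover have "(\<lambda>i j. l * g i j) \<in> S" "(\<lambda>i j. - (l * h i j)) \<in> M2sq"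
    using S_scale[OF \<open>g \<in> S\<close>] M2sq_scale[OF \<open>h \<in> M2sq\<close>, of "- l"] by auto
  ultimately show "(0, fps_const b * fps_X ^ k) \<in> tangent_jets k \<phi> S"
    unfolding tangent_jets_def by (intro CollectI exI[of _ e] exI[of _ "\<lambda>i j. l * g i j"]
        exI[of _ "\<lambda>i j. - (l * h i j)"]) simp
qed

lemma Sigma_fst: "\<psi> \<in> Sigma G \<Longrightarrow> fst \<psi> = fps_X ^ sg_v0 G"
  by (auto simp: Sigma_def)

lemma Sigma_snd_nth:
  assumes "\<psi> \<in> Sigma G" "n \<le> sg_v1 G"
  shows "snd \<psi> $ n = (if n = sg_v1 G then 1 else 0)"
proof -
  obtain a where \<psi>: "snd \<psi> = fps_X ^ sg_v1 G
      + (\<Sum>i\<in>{sg_v1 G<..<conductor G}. fps_const (a i) * fps_X ^ i)"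
    using assms(1) by (auto simp: Sigma_def)
  have "(\<Sum>i\<in>{sg_v1 G<..<conductor G}. fps_const (a i) * fps_X ^ i) $ n = 0"
    unfolding fps_sum_nth using assms(2) by (intro sum.neutral) auto
  then show ?thesis unfolding \<psi> by simp
qed

text \<open>The coordinate \<open>Y\<close> has value \<open>v1\<close>, so \<open>v1 \<in> \<Gamma>\<close>; since \<open>v0\<close> is the least positive
  element of \<open>\<Gamma>\<close> and does not divide \<open>v1\<close>, we get \<open>0 < v0 < v1\<close>.\<close>
lemma Sigma_v0_less_v1:
  assumes "\<psi> \<in> Sigma G"
  shows "0 < sg_v0 G" "sg_v0 G < sg_v1 G"
proof -
  have not_dvd: "\<not> sg_v0 G dvd sg_v1 G" and sg: "semigroup_of \<psi> = G"
    using assms by (auto simp: Sigma_def)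
  then have v1_pos: "0 < sg_v1 G" by (cases "sg_v1 G") auto
  have lead: "pull \<psi> coordY $ sg_v1 G \<noteq> 0"
    using v1_pos by (simp add: pull_coordY_nth Sigma_snd_nth[OF assms])
  have "subdegree (pull \<psi> coordY) = sg_v1 G"
    using lead by (rule subdegreeI) (simp add: pull_coordY_nth Sigma_snd_nth[OF assms])
  then have "sg_v1 G \<in> G"
    using lead conv2_coordY unfolding sg[symmetric] semigroup_of_def by force
  then have v1: "sg_v1 G \<in> G \<and> 0 < sg_v1 G" using v1_pos by simp
  have "sg_v0 G \<in> G \<and> 0 < sg_v0 G" "sg_v0 G \<le> sg_v1 G"
    unfolding sg_v0_def by (rule LeastI[where P = "\<lambda>n. n \<in> G \<and> 0 < n", OF v1],
        rule Least_le[where P = "\<lambda>n. n \<in> G \<and> 0 < n", OF v1])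
  then show "0 < sg_v0 G" "sg_v0 G < sg_v1 G"
    using not_dvd by (auto simp: order.order_iff_strict)
qed

lemma Sigma_jet_normal_form:
  assumes "\<psi> \<in> Sigma G" "sg_v1 G < k"
  shows "fst (jet_pair k \<psi>) = fps_X ^ sg_v0 G" "1 \<le> sg_v0 G"
    "order_ge (sg_v0 G + 1) (snd (jet_pair k \<psi>))"
proof -
  note v01 = Sigma_v0_less_v1[OF assms(1)]
  show "fst (jet_pair k \<psi>) = fps_X ^ sg_v0 G"
    using v01 assms(2) by (intro fps_ext) (auto simp: jet_pair_def jet_nth Sigma_fst[OF assms(1)])
  show "1 \<le> sg_v0 G" using v01 by simp
  show "order_ge (sg_v0 G + 1) (snd (jet_pair k \<psi>))"
    using v01 assms(2) Sigma_snd_nth[OF assms(1)]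
    by (auto simp: order_ge_def jet_pair_def jet_nth)
qed

theorem proposition3p3:
  fixes G :: "nat set" and \<psi> \<phi> :: param and k :: nat and b :: complex
  assumes "\<psi> \<in> Sigma G"
    and "k > sg_v1 G"
    and "\<phi> = jet_pair k \<psi>"
    and "b \<noteq> 0"
  shows "((0, fps_const b * fps_X ^ k) \<in> T1 k \<phi> \<longleftrightarrow> k + sg_v0 G \<in> Lambda2 \<phi>)
       \<and> ((0, fps_const b * fps_X ^ k) \<in> Ttilde k \<phi> \<longleftrightarrow> k + sg_v0 G \<in> LambdaP \<phi>)"
proof -
  note normal_form = Sigma_jet_normal_form[OF assms(1,2), folded assms(3)]
  note iff = tangent_jets_iff_form_values[OF normal_form assms(4)]
  have "T1 k \<phi> = tangent_jets k \<phi> M2sq" "Lambda2 \<phi> = form_values \<phi> M2sq"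
    "Ttilde k \<phi> = tangent_jets k \<phi> IdX2Y" "LambdaP \<phi> = form_values \<phi> IdX2Y"
    by (simp_all add: T1_def Ttilde_def Lambda2_def LambdaP_def tangent_jets_def form_values_def)
  moreover have "(0, fps_const b * fps_X ^ k) \<in> tangent_jets k \<phi> M2sq
      \<longleftrightarrow> k + sg_v0 G \<in> form_values \<phi> M2sq"
    by (rule iff) (auto simp: M2sq_def intro: conv2_scale)
  moreover have "(0, fps_const b * fps_X ^ k) \<in> tangent_jets k \<phi> IdX2Y
      \<longleftrightarrow> k + sg_v0 G \<in> form_values \<phi> IdX2Y"
    by (rule iff) (auto simp: IdX2Y_def intro: conv2_scale)
  ultimately show ?thesis by simp
qed

end
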